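(* Consider the Weakener algorithm (described in the context) for $n \ge 3$ processes $p_0,\dots,p_{n-1}$. If the registers $R_1[j]$, $R_2[j]$, $C_1[j]$ ($j\ge 0$) used by the algorithm are strongly linearizable, then the algorithm terminates even against a strong adversary: with probability 1, all the correct processes reach the return statement (after their for loop); furthermore, they do so within 2 expected rounds.
   Context: Model: an asynchronous shared-memory system of $n\ge 3$ processes $p_0,\dots,p_{n-1}$ that may fail by crashing. A process is correct if it takes infinitely many steps. After returning from the algorithm, a process takes no-op steps forever. A strong adversary is a scheduler that sees the entire history so far, including the results of all coin flips made so far, and chooses adaptively which process takes the next step. A "strongly linearizable register" means an implemented register whose implementation is strongly linearizable. Strong linearizability: a set of histories $\mathcal{H}$ is strongly linearizable if there is a function $f$ from the prefix-closure of $\mathcal{H}$ to sequential histories such that (L) for every $H$ in the prefix-closure, $f(H)$ is a linearization of $H$ (a sequential history consistent with the real-time order of non-overlapping operations of $H$ and with the objects' sequential specifications), and (P) whenever $G$ is a prefix of $H$ (both in the prefix-closure), $f(G)$ is a prefix of $f(H)$. Weakener algorithm. Shared registers, for each $j = 0,1,2,\dots$: $R_1[j]$, a multi-writer multi-reader register initialized to $\bot$; $C_1[j]$, a register written only by $p_0$, initialized to $-1$; $R_2[j]$, a register initialized to $\textsc{false}$. Code of $p_i$ for $i \in \{0,1\}$: for rounds $j=0,1,2,\dots$: (Phase 1) write $i$ into $R_1[j]$; if $i=0$, flip a fair coin (outcome in $\{0,1\}$) and write the outcome into $C_1[j]$; (Phase 2) read $R_2[j]$ into local variable $v_1$; if $v_1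 = \textsc{false}$, exit the for loop. After the loop: return. Code of $p_i$ for $i \in \{2,\dots,n-1\}$: for rounds $j=0,1,2,\dots$: (Phase 1) read $R_1[j]$ into $u_1$; read $R_1[j]$ into $u_2$; read $C_1[j]$ into $c_1$; if $u_1 \ne c_1$ or $u_2 \ne 1-c_1$, exit the for loop; (Phase 2) write $\textsc{true}$ into $R_2[j]$. After the loop: return. *)

theory Defs
  imports "HOL-Probability.Probability"
begin

text \<open>Register operations on the shared registers R1[j], C1[j], R2[j].
  R1 values: None = bottom, Some i = i.  C1 values: int (initially -1).  R2: bool.\<close>

datatype rop = RdR1 nat | WrR1 nat int | RdC1 nat | WrC1 nat int | RdR2 nat | WrR2 nat

datatype rres = ResR1 "int option" | ResC1 int | ResR2 bool | Ack

record shmem =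
  r1 :: "nat \<Rightarrow> int option"
  c1 :: "nat \<Rightarrow> int"
  r2 :: "nat \<Rightarrow> bool"

fun apply_op :: "shmem \<Rightarrow> rop \<Rightarrow> shmem \<times> rres" where
  "apply_op m (RdR1 j) = (m, ResR1 (r1 m j))"
| "apply_op m (WrR1 j v) = (m\<lparr>r1 := (r1 m)(j := Some v)\<rparr>, Ack)"
| "apply_op m (RdC1 j) = (m, ResC1 (c1 m j))"
| "apply_op m (WrC1 j v) = (m\<lparr>c1 := (c1 m)(j := v)\<rparr>, Ack)"
| "apply_op m (RdR2 j) = (m, ResR2 (r2 m j))"
| "apply_op m (WrR2 j) = (m\<lparr>r2 := (r2 m)(j := True)\<rparr>, Ack)"

text \<open>Program counters. p0,p1: W1 (write R1[j]), Flip (p0 only: local coin flip),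
  WC (p0 only: write coin to C1[j]), RR2 (read R2[j]).
  p_i, i>=2: RU1, RU2 (read R1[j] twice), RC (read C1[j] and test), WR2 (write R2[j]).\<close>
datatype pcv = W1 | Flip | WC | RR2 | RU1 | RU2 | RC | WR2 | Ret

text \<open>Local state; pend is the pending register operation (if any) together with
  its result once it has been linearized.\<close>
record lstate =
  pc :: pcv
  rnd :: nat
  u1 :: "int option"
  u2 :: "int option"
  cf :: int
  pend :: "(rop \<times> rres option) option"

record cfg =
  shm :: shmem
  loc :: "nat \<Rightarrow> lstate"

definition cur_op :: "nat \<Rightarrow> lstate \<Rightarrow> rop option" where
  "cur_op i s = (case pc s of
      W1 \<Rightarrow> Some (WrR1 (rnd s) (int i))
    | WC \<Rightarrow> Some (WrC1 (rnd s) (cf s))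
    | RR2 \<Rightarrow> Some (RdR2 (rnd s))
    | RU1 \<Rightarrow> Some (RdR1 (rnd s))
    | RU2 \<Rightarrow> Some (RdR1 (rnd s))
    | RC \<Rightarrow> Some (RdC1 (rnd s))
    | WR2 \<Rightarrow> Some (WrR2 (rnd s))
    | _ \<Rightarrow> None)"

definition after :: "nat \<Rightarrow> lstate \<Rightarrow> rres \<Rightarrow> lstate" where
  "after i s r = (case pc s of
      W1 \<Rightarrow> (if i = 0 then s\<lparr>pc := Flip\<rparr> else s\<lparr>pc := RR2\<rparr>)
    | WC \<Rightarrow> s\<lparr>pc := RR2\<rparr>
    | RR2 \<Rightarrow> (if r = ResR2 False then s\<lparr>pc := Ret\<rparr>
              else s\<lparr>pc := W1, rnd := Suc (rnd s)\<rparr>)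
    | RU1 \<Rightarrow> (case r of ResR1 v \<Rightarrow> s\<lparr>pc := RU2, u1 := v\<rparr> | _ \<Rightarrow> s)
    | RU2 \<Rightarrow> (case r of ResR1 v \<Rightarrow> s\<lparr>pc := RC, u2 := v\<rparr> | _ \<Rightarrow> s)
    | RC \<Rightarrow> (case r of ResC1 c \<Rightarrow>
               (if u1 s \<noteq> Some c \<or> u2 s \<noteq> Some (1 - c) then s\<lparr>pc := Ret\<rparr>
                else s\<lparr>pc := WR2\<rparr>)
             | _ \<Rightarrow> s)
    | WR2 \<Rightarrow> s\<lparr>pc := RU1, rnd := Suc (rnd s)\<rparr>
    | _ \<Rightarrow> s)"

text \<open>A step of process i (b is a fresh fair coin, used only by the coin-flip step).
  A step either invokes the next register operation, or responds to the pending one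
  (linearizing it at that point if the adversary has not linearized it yet),
  or flips the coin, or (after return) is a no-op.\<close>
definition proc_step :: "nat \<Rightarrow> bool \<Rightarrow> cfg \<Rightarrow> cfg" where
  "proc_step i b c = (let s = loc c i in
     case pend s of
       None \<Rightarrow>
         (if pc s = Flip then c\<lparr>loc := (loc c)(i := s\<lparr>pc := WC, cf := (if b then 1 else 0)\<rparr>)\<rparr>
          else (case cur_op i s of
                  None \<Rightarrow> c
                | Some q \<Rightarrow> c\<lparr>loc := (loc c)(i := s\<lparr>pend := Some (q, None)\<rparr>)\<rparr>))
     | Some (q, Some r) \<Rightarrow> c\<lparr>loc := (loc c)(i := after i (s\<lparr>pend := None\<rparr>) r)\<rparr>
     | Some (q, None) \<Rightarrow> (let (m', r) = apply_op (shm c) q in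
          c\<lparr>shm := m', loc := (loc c)(i := after i (s\<lparr>pend := None\<rparr>) r)\<rparr>))"

text \<open>Linearization of the pending operation of process i, chosen online by the adversary
  (strong linearizability: linearization points are fixed irrevocably, as prefixes grow).\<close>
definition lin_step :: "nat \<Rightarrow> cfg \<Rightarrow> cfg" where
  "lin_step i c = (case pend (loc c i) of
       Some (q, None) \<Rightarrow> (let (m', r) = apply_op (shm c) q in
           c\<lparr>shm := m', loc := (loc c)(i := (loc c i)\<lparr>pend := Some (q, Some r)\<rparr>)\<rparr>)
     | _ \<Rightarrow> c)"

datatype action = Step nat | Lin nat

fun act_proc :: "action \<Rightarrow> nat" where
  "act_proc (Step i) = i"
| "act_proc (Lin i) = i"

definition do_act :: "action \<Rightarrow> bool \<Rightarrow> cfg \<Rightarrow> cfg" where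
  "do_act a b c = (case a of Step i \<Rightarrow> proc_step i b c | Lin i \<Rightarrow> lin_step i c)"

definition init_cfg :: cfg where
  "init_cfg = \<lparr>shm = \<lparr>r1 = (\<lambda>_. None), c1 = (\<lambda>_. -1), r2 = (\<lambda>_. False)\<rparr>,
     loc = (\<lambda>i. \<lparr>pc = (if i \<le> 1 then W1 else RU1), rnd = 0, u1 = None, u2 = None,
                  cf = 0, pend = None\<rparr>)\<rparr>"

text \<open>A strong adversary: sees the whole history so far (all configurations, including all
  coin flip outcomes so far) and picks the next action.\<close>
type_synonym adversary = "cfg list \<Rightarrow> action"

fun hist :: "adversary \<Rightarrow> bool stream \<Rightarrow> nat \<Rightarrow> cfg list" where
  "hist A \<omega> 0 = [init_cfg]"
| "hist A \<omega> (Suc t) = (let h = hist A \<omega> t in h @ [do_act (A h) (\<omega> !! t) (last h)])"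

definition config :: "adversary \<Rightarrow> bool stream \<Rightarrow> nat \<Rightarrow> cfg" where
  "config A \<omega> t = last (hist A \<omega> t)"

definition sched :: "adversary \<Rightarrow> bool stream \<Rightarrow> nat \<Rightarrow> action" where
  "sched A \<omega> t = A (hist A \<omega> t)"

definition correct :: "adversary \<Rightarrow> bool stream \<Rightarrow> nat \<Rightarrow> bool" where
  "correct A \<omega> i \<longleftrightarrow> (\<exists>\<^sub>\<infinity> t. sched A \<omega> t = Step i)"

definition returned :: "adversary \<Rightarrow> bool stream \<Rightarrow> nat \<Rightarrow> bool" where
  "returned A \<omega> i \<longleftrightarrow> (\<exists>t. pc (loc (config A \<omega> t) i) = Ret)"

text \<open>Number of rounds of the execution: the largest (1-based) round reached by any process.\<close>
definition rounds :: "nat \<Rightarrow> adversary \<Rightarrow> bool stream \<Rightarrow> ennreal" where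
  "rounds n A \<omega> = (SUP t. SUP i\<in>{..<n}. ennreal (real (Suc (rnd (loc (config A \<omega> t) i)))))"

text \<open>Fair coins, one per time step.\<close>
definition coins :: "bool stream measure" where
  "coins = stream_space (measure_pmf (bernoulli_pmf (1/2)))"

end

theory Submission
  imports Defs
begin

text \<open>Strong linearizability lets the adversary fix linearization points only online. In round
  \<open>j\<close>, \<open>p\<^sub>0\<close> writes \<open>R\<^sub>1[j]\<close> before flipping its coin \<open>c\<close>, so when \<open>c\<close> is flipped the first
  writer \<open>f\<close> of \<open>R\<^sub>1[j]\<close> is already determined. A reader passes round \<open>j\<close> only if it reads \<open>c\<close>
  and then \<open>1 - c\<close> from \<open>R\<^sub>1[j]\<close>; as \<open>R\<^sub>1[j]\<close> changes value at most once, this forces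
  \<open>c = f\<close>, and \<open>p\<^sub>0\<close>, \<open>p\<^sub>1\<close> leave round \<open>j\<close> only after some reader passed it. Hence reaching
  round \<open>k\<close> requires \<open>k\<close> fair coins to agree with values fixed before they were flipped, which
  happens with probability at most \<open>2\<^sup>-\<^sup>k\<close>. So the expected number of rounds is at most
  \<open>\<Sum>\<^sub>k 2\<^sup>-\<^sup>k = 2\<close>; in particular the rounds are almost surely bounded, and then every correct
  process returns, since each of its steps strictly increases a measure bounded in terms of its
  round.\<close>

section \<open>Predicting fair coins\<close>

text \<open>A predictor sees the coins flipped so far and may announce a guess for the next one.\<close>
type_synonym coin_predictor = "bool list \<Rightarrow> bool option"

fun guess_count :: "coin_predictor \<Rightarrow> bool stream \<Rightarrow> nat \<Rightarrow> nat" where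
  "guess_count G \<omega> 0 = 0"
| "guess_count G \<omega> (Suc t) = guess_count G \<omega> t + (if G (stake t \<omega>) = None then 0 else 1)"

fun guesses_right :: "coin_predictor \<Rightarrow> nat \<Rightarrow> bool stream \<Rightarrow> nat \<Rightarrow> bool" where
  "guesses_right G k \<omega> 0 = True"
| "guesses_right G k \<omega> (Suc t) = (guesses_right G k \<omega> t \<and> (guess_count G \<omega> t < k \<longrightarrow>
      (case G (stake t \<omega>) of None \<Rightarrow> True | Some b \<Rightarrow> \<omega> !! t = b)))"

definition guess_wins :: "coin_predictor \<Rightarrow> nat \<Rightarrow> nat \<Rightarrow> bool stream set" where
  "guess_wins G k t = {\<omega>. k \<le> guess_count G \<omega> t \<and> guesses_right G k \<omega> t}"

lemma guesses_right_iff: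
  "guesses_right G k \<omega> t \<longleftrightarrow> (\<forall>s<t. guess_count G \<omega> s < k \<longrightarrow>
      (case G (stake s \<omega>) of None \<Rightarrow> True | Some b \<Rightarrow> \<omega> !! s = b))"
  by (induction t) (auto simp: less_Suc_eq)

lemma guesses_right_0 [simp]: "guesses_right G 0 \<omega> t"
  by (induction t) auto

lemma guess_count_Cons:
  "guess_count G (x ## \<omega>) (Suc t) = (if G [] = None then 0 else 1) + guess_count (\<lambda>l. G (x # l)) \<omega> t"
  by (induction t) auto

lemma guesses_right_Cons:
  "guesses_right G k (x ## \<omega>) (Suc t) \<longleftrightarrow>
     (0 < k \<longrightarrow> (case G [] of None \<Rightarrow> True | Some b \<Rightarrow> x = b)) \<and>
     guesses_right (\<lambda>l. G (x # l)) (k - (if G [] = None then 0 else 1)) \<omega> t"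
proof (induction t)
  case (Suc t)
  have "guess_count G (x ## \<omega>) (Suc t) < k \<longleftrightarrow>
        guess_count (\<lambda>l. G (x # l)) \<omega> t < k - (if G [] = None then 0 else 1)"
    unfolding guess_count_Cons by auto
  then show ?case
    by (subst guesses_right.simps(2), subst Suc.IH)
      (simp only: guesses_right.simps(2) stake.simps snth.simps stream.sel, blast)
qed (auto split: option.splits)

lemma guess_wins_Cons:
  "{\<omega>. x ## \<omega> \<in> guess_wins G k (Suc t)} =
     (if k = 0 then UNIV
      else case G [] of
        None \<Rightarrow> guess_wins (\<lambda>l. G (x # l)) k t
      | Some b \<Rightarrow> if x = b then guess_wins (\<lambda>l. G (x # l)) (k - 1) t else {})"
  by (simp only: guess_wins_def mem_Collect_eq guess_count_Cons guesses_right_Cons)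
    (auto split: option.splits)

lemma guess_count_guesses_right_stake_cong:
  assumes "stake t \<omega> = stake t \<omega>'"
  shows "guess_count G \<omega> t = guess_count G \<omega>' t \<and> guesses_right G k \<omega> t = guesses_right G k \<omega>' t"
  using assms
proof (induction t)
  case (Suc t)
  then have "stake t \<omega> @ [\<omega> !! t] = stake t \<omega>' @ [\<omega>' !! t]"
    by (simp only: stake_Suc)
  with Suc.IH show ?case by (auto split: option.splits)
qed simp

lemma sets_coins: "sets coins = sets (stream_space (count_space UNIV))"
  unfolding coins_def by (rule sets_stream_space_cong) simp

lemma space_coins: "space coins = UNIV"
  unfolding coins_def by (simp add: space_stream_space)

lemma prob_space_coins: "prob_space coins"
  unfolding coins_def by (intro prob_space.prob_space_stream_space prob_space_measure_pmf)

lemma sets_coinsI_stake: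
  assumes "\<And>\<omega> \<omega>'. stake t \<omega> = stake t \<omega>' \<Longrightarrow> \<omega> \<in> S \<Longrightarrow> \<omega>' \<in> S"
  shows "S \<in> sets coins"
proof -
  have "stake t \<in> measurable coins (count_space UNIV)"
    using measurable_stake[where i=t and 'a=bool]
    by (simp add: measurable_def sets_coins space_coins space_stream_space)
  then have "stake t -` (stake t ` S) \<inter> space coins \<in> sets coins"
    by (rule measurable_sets) simp
  moreover have "stake t -` (stake t ` S) \<inter> space coins = S"
  proof (intro equalityI subsetI)
    fix \<omega> assume "\<omega> \<in> stake t -` (stake t ` S) \<inter> space coins"
    then obtain \<omega>' where "\<omega>' \<in> S" "stake t \<omega>' = stake t \<omega>" by auto
    then show "\<omega> \<in> S" using assms by blast
  qed (auto simp: space_coins)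
  ultimately show ?thesis by simp
qed

lemma sets_guess_wins [measurable]: "guess_wins G k t \<in> sets coins"
  by (rule sets_coinsI_stake[of t])
    (auto simp: guess_wins_def dest: guess_count_guesses_right_stake_cong[where G=G and k=k])

lemma emeasure_guess_wins_le: "emeasure coins (guess_wins G k t) \<le> (1/2) ^ k"
proof (induction t arbitrary: G k)
  case 0
  interpret prob_space coins by (rule prob_space_coins)
  show ?case by (cases k) (auto simp: guess_wins_def emeasure_space_1[unfolded space_coins])
next
  case (Suc t)
  interpret prob_space coins by (rule prob_space_coins)
  let ?M = "measure_pmf (bernoulli_pmf (1/2))"
  show ?case
  proof (cases k)
    case 0
    then show ?thesis using emeasure_le_1 by simp
  next
    case (Suc k')
    have split_first: "emeasure coins (guess_wins G k (Suc t)) =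
      (\<integral>\<^sup>+x. emeasure coins {\<omega>. x ## \<omega> \<in> guess_wins G k (Suc t)} \<partial>?M)"
      using prob_space.emeasure_stream_space[OF prob_space_measure_pmf[of "bernoulli_pmf (1/2)"],
          of "guess_wins G k (Suc t)"] sets_guess_wins[of G k "Suc t"]
      by (simp add: coins_def[symmetric] space_coins)
    show ?thesis
    proof (cases "G []")
      case None
      have "emeasure coins (guess_wins G k (Suc t)) \<le> (\<integral>\<^sup>+x. (1/2)^k \<partial>?M)"
        unfolding split_first
        by (intro nn_integral_mono) (simp add: guess_wins_Cons None Suc Suc.IH del: power_Suc)
      then show ?thesis by (simp add: measure_pmf.emeasure_space_1)
    next
      case (Some b)
      have "emeasure coins (guess_wins G k (Suc t)) \<le> (\<integral>\<^sup>+x. (1/2)^k' * indicator {b} x \<partial>?M)"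
        unfolding split_first
        by (rule nn_integral_mono) (auto simp: guess_wins_Cons Some Suc Suc.IH split: split_indicator)
      also have "\<dots> = (1/2)^k' * emeasure ?M {b}"
        by (simp add: nn_integral_cmult_indicator)
      also have "\<dots> = (1/2)^k"
        using Suc by (cases b) (simp_all add: emeasure_pmf_single ennreal_power
            ennreal_mult[symmetric] mult.commute divide_ennreal_def)
      finally show ?thesis .
    qed
  qed
qed

lemma incseq_guess_wins: "incseq (guess_wins G k)"
  by (rule incseq_SucI) (auto simp: guess_wins_def split: option.splits)

lemma emeasure_UN_guess_wins_le: "emeasure coins (\<Union>t. guess_wins G k t) \<le> (1/2) ^ k"
proof -
  have "emeasure coins (\<Union>t. guess_wins G k t) = (SUP t. emeasure coins (guess_wins G k t))"
    by (rule SUP_emeasure_incseq[symmetric]) (auto intro: incseq_guess_wins)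
  also have "\<dots> \<le> (1/2) ^ k"
    by (rule SUP_least) (rule emeasure_guess_wins_le)
  finally show ?thesis .
qed

section \<open>The effective state of a configuration\<close>

text \<open>In the effective state an operation counts as completed once it is linearized, and as not
  yet invoked before; every action then changes the effective configuration by at most one
  atomic step.\<close>
definition eff_state :: "nat \<Rightarrow> lstate \<Rightarrow> lstate" where
  "eff_state i s = (case pend s of
      Some (q, Some r) \<Rightarrow> after i (s\<lparr>pend := None\<rparr>) r
    | _ \<Rightarrow> s\<lparr>pend := None\<rparr>)"

definition eff_loc :: "cfg \<Rightarrow> nat \<Rightarrow> lstate" where
  "eff_loc c = (\<lambda>i. eff_state i (loc c i))"

definition pend_wf :: "nat \<Rightarrow> lstate \<Rightarrow> bool" where
  "pend_wf i s \<longleftrightarrow> (pc s = Flip \<longrightarrow> i = 0) \<and>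
     (case pend s of
        None \<Rightarrow> True
      | Some (q, x) \<Rightarrow> cur_op i s = Some q \<and> (case x of None \<Rightarrow> True | Some r \<Rightarrow> \<exists>m. r = snd (apply_op m q)))"

definition cfg_wf :: "cfg \<Rightarrow> bool" where
  "cfg_wf c \<longleftrightarrow> (\<forall>i. pend_wf i (loc c i))"

definition is_flip :: "action \<Rightarrow> cfg \<Rightarrow> bool" where
  "is_flip a c \<longleftrightarrow> a = Step 0 \<and> pend (loc c 0) = None \<and> pc (loc c 0) = Flip"

definition exec_op :: "shmem \<Rightarrow> (nat \<Rightarrow> lstate) \<Rightarrow> nat \<Rightarrow> rop \<Rightarrow> shmem \<times> (nat \<Rightarrow> lstate)" where
  "exec_op m P i q = (fst (apply_op m q), P(i := after i (P i) (snd (apply_op m q))))"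

definition exec_flip :: "(nat \<Rightarrow> lstate) \<Rightarrow> bool \<Rightarrow> nat \<Rightarrow> lstate" where
  "exec_flip P b = P(0 := (P 0)\<lparr>pc := WC, cf := (if b then 1 else 0)\<rparr>)"

lemma after_pend [simp]: "pend (after i s r) = pend s"
  by (auto simp: after_def split: pcv.splits rres.splits)

lemma after_pend_update [simp]: "after i (s\<lparr>pend := x\<rparr>) r = (after i s r)\<lparr>pend := x\<rparr>"
  by (auto simp: after_def split: pcv.splits rres.splits)

lemma cur_op_pend_update [simp]: "cur_op i (s\<lparr>pend := x\<rparr>) = cur_op i s"
  by (cases "pc s") (simp_all add: cur_op_def)

lemma cur_op_eq_None_iff: "cur_op i s = None \<longleftrightarrow> pc s = Flip \<or> pc s = Ret"
  by (auto simp: cur_op_def split: pcv.splits)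

lemma after_pc_Flip: "pc (after i s r) = Flip \<Longrightarrow> pc s \<noteq> Flip \<Longrightarrow> i = 0"
  by (auto simp: after_def split: pcv.splits rres.splits if_splits)

lemma pend_update_same: "pend s = None \<Longrightarrow> s\<lparr>pend := None\<rparr> = s"
  by (cases s) simp

lemma eff_state_no_pend: "pend s = None \<Longrightarrow> eff_state i s = s"
  by (simp add: eff_state_def pend_update_same)

lemma is_flip_pc: "is_flip a c \<Longrightarrow> pc (eff_loc c 0) = Flip"
  by (simp add: is_flip_def eff_loc_def eff_state_no_pend)

lemma eff_state_pending: "pend s = Some (q, None) \<Longrightarrow> eff_state i s = s\<lparr>pend := None\<rparr>"
  by (simp add: eff_state_def)

lemma eff_loc_update: "eff_loc (c\<lparr>shm := m', loc := (loc c)(i := s')\<rparr>) = (eff_loc c)(i := eff_state i s')"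
  by (auto simp: eff_loc_def)

lemma cfg_wf_init: "cfg_wf init_cfg"
  by (simp add: cfg_wf_def pend_wf_def init_cfg_def)

lemma cfg_wf_do_act:
  assumes "cfg_wf c"
  shows "cfg_wf (do_act a b c)"
  unfolding cfg_wf_def
proof
  fix j
  have wf: "pend_wf i (loc c i)" for i
    using assms by (simp add: cfg_wf_def)
  show "pend_wf j (loc (do_act a b c) j)"
  proof (cases a)
    case (Step i)
    then show ?thesis
      using wf[of j]
      by (cases "j = i"; cases "pend (loc c i)")
        (auto simp: do_act_def proc_step_def Let_def pend_wf_def cur_op_eq_None_iff
          split: option.splits prod.splits dest: after_pc_Flip)
  next
    case (Lin i)
    then show ?thesis
      using wf[of j]
      by (cases "j = i")
        (auto simp: do_act_def lin_step_def Let_def pend_wf_def split: option.splits prod.splits,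
          (metis snd_conv)+)
  qed
qed

lemma exec_op_lin_step:
  assumes "pend (loc c i) = Some (q, None)"
  shows "(shm (lin_step i c), eff_loc (lin_step i c)) = exec_op (shm c) (eff_loc c) i q"
  using assms
  by (auto simp: lin_step_def eff_loc_update exec_op_def Let_def split: prod.splits)
    (auto simp: eff_loc_def eff_state_def)

lemma exec_op_proc_step:
  assumes "pend (loc c i) = Some (q, None)"
  shows "(shm (proc_step i b c), eff_loc (proc_step i b c)) = exec_op (shm c) (eff_loc c) i q"
  using assms
  by (auto simp: proc_step_def eff_loc_update exec_op_def Let_def split: prod.splits)
    (auto simp: eff_loc_def eff_state_pending eff_state_no_pend)

lemma proc_step_flip:
  assumes "pend (loc c 0) = None" "pc (loc c 0) = Flip"
  shows "shm (proc_step 0 b c) = shm c \<and> eff_loc (proc_step 0 b c) = exec_flip (eff_loc c) b"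
  using assms by (auto simp: proc_step_def exec_flip_def eff_loc_def eff_state_no_pend)

lemma proc_step_invoke:
  assumes "pend (loc c i) = None" "pc (loc c i) \<noteq> Flip"
  shows "shm (proc_step i b c) = shm c \<and> eff_loc (proc_step i b c) = eff_loc c"
  using assms
  by (cases "cur_op i (loc c i)") (auto simp: proc_step_def eff_loc_def eff_state_def intro!: ext)

lemma proc_step_answered:
  assumes "pend (loc c i) = Some (q, Some r)"
  shows "shm (proc_step i b c) = shm c \<and> eff_loc (proc_step i b c) = eff_loc c"
  using assms by (auto simp: proc_step_def eff_loc_def eff_state_def pend_update_same)

lemma lin_step_idle: "\<forall>q. pend (loc c i) \<noteq> Some (q, None) \<Longrightarrow> lin_step i c = c"
  by (auto simp: lin_step_def split: option.splits)

lemma do_act_cases: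
  assumes "cfg_wf c"
  obtains (flip) "is_flip a c" "shm (do_act a b c) = shm c"
      "eff_loc (do_act a b c) = exec_flip (eff_loc c) b"
  | (stutter) "\<not> is_flip a c" "shm (do_act a b c) = shm c" "eff_loc (do_act a b c) = eff_loc c"
  | (exec) i q where "\<not> is_flip a c" "cur_op i (eff_loc c i) = Some q"
      "(shm (do_act a b c), eff_loc (do_act a b c)) = exec_op (shm c) (eff_loc c) i q"
proof -
  have wf: "pend_wf i (loc c i)" for i
    using assms by (simp add: cfg_wf_def)
  have cur_op_pending: "cur_op i (eff_loc c i) = Some q" if "pend (loc c i) = Some (q, None)" for i q
    using wf[of i] that by (simp add: pend_wf_def eff_loc_def eff_state_pending)
  show thesis
  proof (cases a)
    case (Lin i)
    then have not_flip: "\<not> is_flip a c"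
      by (simp add: is_flip_def)
    show thesis
    proof (cases "\<exists>q. pend (loc c i) = Some (q, None)")
      case True
      then obtain q where q: "pend (loc c i) = Some (q, None)"
        by blast
      show thesis
        by (rule exec[OF not_flip cur_op_pending[OF q]]) (simp add: Lin do_act_def exec_op_lin_step[OF q])
    qed (use Lin not_flip stutter lin_step_idle in \<open>simp add: do_act_def\<close>)
  next
    case (Step i)
    consider (idle) "pend (loc c i) = None" | (pending) q where "pend (loc c i) = Some (q, None)"
      | (answered) q r where "pend (loc c i) = Some (q, Some r)"
      by (metis option.exhaust prod.exhaust)
    then show thesis
    proof cases
      case idle
      show thesis
      proof (cases "pc (loc c i) = Flip")
        case True
        with wf[of i] have "i = 0"
          by (simp add: pend_wf_def)
        with idle True Step show thesis
          using proc_step_flip by (intro flip) (simp_all add: is_flip_def do_act_def)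
      next
        case False
        with idle Step show thesis
          using proc_step_invoke by (intro stutter) (auto simp: is_flip_def do_act_def)
      qed
    next
      case (pending q)
      with Step have "\<not> is_flip a c"
        by (auto simp: is_flip_def)
      then show thesis
        by (rule exec[OF _ cur_op_pending[OF pending]])
          (simp add: Step do_act_def exec_op_proc_step[OF pending])
    next
      case (answered q r)
      with Step show thesis
        using proc_step_answered by (intro stutter) (auto simp: is_flip_def do_act_def)
    qed
  qed
qed

section \<open>An invariant of the algorithm\<close>

definition has_written :: "(nat \<Rightarrow> lstate) \<Rightarrow> nat \<Rightarrow> nat \<Rightarrow> bool" where
  "has_written P i j \<longleftrightarrow> j < rnd (P i) \<or> (j = rnd (P i) \<and> pc (P i) \<noteq> W1)"

definition round_passed :: "shmem \<Rightarrow> (nat \<Rightarrow> lstate) \<Rightarrow> nat \<Rightarrow> bool" where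
  "round_passed m P j \<longleftrightarrow>
     (\<exists>i. j < rnd (P i)) \<or> (\<exists>i. 2 \<le> i \<and> rnd (P i) = j \<and> pc (P i) = WR2) \<or> r2 m j"

definition record_first_write :: "shmem \<Rightarrow> (nat \<Rightarrow> int option) \<Rightarrow> nat \<Rightarrow> int option" where
  "record_first_write m fw = (\<lambda>j. if fw j = None then r1 m j else fw j)"

definition pc_range :: "nat \<Rightarrow> pcv set" where
  "pc_range i = (if i = 0 then {W1, Flip, WC, RR2, Ret}
     else if i = 1 then {W1, RR2, Ret} else {RU1, RU2, RC, WR2, Ret})"

definition inv_pc :: "(nat \<Rightarrow> lstate) \<Rightarrow> bool" where
  "inv_pc P \<longleftrightarrow> (\<forall>i. pc (P i) \<in> pc_range i)"

text \<open>The ghost variable \<open>fw j\<close> is the id of the first of \<open>p\<^sub>0\<close>, \<open>p\<^sub>1\<close> to write \<open>R\<^sub>1[j]\<close>;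
  once both have written, \<open>R\<^sub>1[j]\<close> holds the other id.\<close>
definition first_write_ok :: "shmem \<Rightarrow> (nat \<Rightarrow> lstate) \<Rightarrow> (nat \<Rightarrow> int option) \<Rightarrow> nat \<Rightarrow> bool" where
  "first_write_ok m P fw j \<longleftrightarrow>
     (fw j = None \<or> fw j = Some 0 \<or> fw j = Some 1) \<and>
     (fw j = None \<longleftrightarrow> \<not> has_written P 0 j \<and> \<not> has_written P 1 j) \<and>
     (fw j = Some 0 \<longrightarrow> has_written P 0 j) \<and> (fw j = Some 1 \<longrightarrow> has_written P 1 j) \<and>
     r1 m j = (if has_written P 0 j \<and> has_written P 1 j then map_option (\<lambda>v. 1 - v) (fw j) else fw j)"

definition inv_first_write :: "shmem \<Rightarrow> (nat \<Rightarrow> lstate) \<Rightarrow> (nat \<Rightarrow> int option) \<Rightarrow> bool" where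
  "inv_first_write m P fw \<longleftrightarrow> (\<forall>j. first_write_ok m P fw j)"

text \<open>Since \<open>R\<^sub>1[j]\<close> changes value at most once, a reader that read two different values
  read the first writer's id first.\<close>
definition reader_ok :: "shmem \<Rightarrow> (nat \<Rightarrow> int option) \<Rightarrow> lstate \<Rightarrow> bool" where
  "reader_ok m fw s \<longleftrightarrow>
     (pc s \<in> {RU2, RC, WR2} \<longrightarrow> u1 s = None \<or> u1 s = fw (rnd s) \<or> u1 s = r1 m (rnd s)) \<and>
     (pc s \<in> {RC, WR2} \<longrightarrow> u1 s \<noteq> None \<longrightarrow> u2 s \<noteq> None \<longrightarrow> u1 s \<noteq> u2 s \<longrightarrow> u1 s = fw (rnd s)) \<and>
     (pc s = WR2 \<longrightarrow> u1 s = Some (c1 m (rnd s)) \<and> u2 s = Some (1 - c1 m (rnd s)))"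

definition inv_readers :: "shmem \<Rightarrow> (nat \<Rightarrow> lstate) \<Rightarrow> (nat \<Rightarrow> int option) \<Rightarrow> bool" where
  "inv_readers m P fw \<longleftrightarrow> (\<forall>i. 2 \<le> i \<longrightarrow> reader_ok m fw (P i))"

definition inv_coin :: "shmem \<Rightarrow> (nat \<Rightarrow> lstate) \<Rightarrow> bool" where
  "inv_coin m P \<longleftrightarrow>
     (\<forall>j. c1 m j \<noteq> -1 \<longrightarrow> j < rnd (P 0) \<or> (j = rnd (P 0) \<and> (pc (P 0) = RR2 \<or> pc (P 0) = Ret)))"

definition inv_passed :: "shmem \<Rightarrow> (nat \<Rightarrow> lstate) \<Rightarrow> (nat \<Rightarrow> int option) \<Rightarrow> bool" where
  "inv_passed m P fw \<longleftrightarrow> (\<forall>j. round_passed m P j \<longrightarrow> fw j = Some (c1 m j))"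

definition weakener_inv :: "shmem \<Rightarrow> (nat \<Rightarrow> lstate) \<Rightarrow> (nat \<Rightarrow> int option) \<Rightarrow> bool" where
  "weakener_inv m P fw \<longleftrightarrow>
     inv_pc P \<and> inv_first_write m P fw \<and> inv_readers m P fw \<and> inv_coin m P \<and> inv_passed m P fw"

lemma pc_range_simps:
  "pc_range 0 = {W1, Flip, WC, RR2, Ret}" "pc_range (Suc 0) = {W1, RR2, Ret}"
  "2 \<le> i \<Longrightarrow> pc_range i = {RU1, RU2, RC, WR2, Ret}"
  by (auto simp: pc_range_def)

lemma pc_range_index:
  assumes "pc s \<in> pc_range i"
  shows "pc s \<in> {W1, RR2} \<Longrightarrow> i < 2" "pc s = WC \<Longrightarrow> i = 0" "pc s \<in> {RU1, RU2, RC, WR2} \<Longrightarrow> 2 \<le> i"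
  using assms by (auto simp: pc_range_def split: if_splits)

lemma weakener_inv_init: "weakener_inv (shm init_cfg) (eff_loc init_cfg) (\<lambda>_. None)"
  by (auto simp: weakener_inv_def eff_loc_def eff_state_def init_cfg_def inv_pc_def pc_range_def
      inv_first_write_def first_write_ok_def has_written_def inv_readers_def reader_ok_def
      inv_coin_def inv_passed_def round_passed_def)

lemma first_write_values:
  "inv_first_write m P fw \<Longrightarrow> fw j = None \<or> fw j = Some 0 \<or> fw j = Some 1"
  unfolding inv_first_write_def first_write_ok_def by blast

lemma r1_values:
  assumes "inv_first_write m P fw"
  shows "r1 m j = None \<or> r1 m j = Some 0 \<or> r1 m j = Some 1"
  using assms first_write_values[OF assms, of j]
  unfolding inv_first_write_def first_write_ok_def by (auto split: if_splits)

lemma first_write_if_written: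
  "inv_first_write m P fw \<Longrightarrow> has_written P 0 j \<Longrightarrow> fw j \<noteq> None"
  unfolding inv_first_write_def first_write_ok_def by blast

lemma record_first_write_keep:
  assumes "inv_first_write m P fw" "fw j \<noteq> None \<or> r1 m' j = r1 m j"
  shows "record_first_write m' fw j = fw j"
  using assms unfolding inv_first_write_def first_write_ok_def record_first_write_def by auto

lemma record_first_write_id:
  assumes "inv_first_write m P fw" "r1 m' = r1 m"
  shows "record_first_write m' fw = fw"
  unfolding fun_eq_iff using record_first_write_keep[OF assms(1)] assms(2) by simp

lemma inv_first_write_cong:
  "has_written P' 0 = has_written P 0 \<Longrightarrow> has_written P' 1 = has_written P 1 \<Longrightarrow> r1 m' = r1 m \<Longrightarrow>
    inv_first_write m' P' fw = inv_first_write m P fw"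
  unfolding inv_first_write_def first_write_ok_def by (simp only:)

lemma inv_first_write_update_reader:
  "2 \<le> i \<Longrightarrow> r1 m' = r1 m \<Longrightarrow> inv_first_write m' (P(i := s)) fw = inv_first_write m P fw"
  by (rule inv_first_write_cong) (auto simp: has_written_def)

lemma inv_first_write_update_writer:
  "rnd s = rnd (P i) \<Longrightarrow> (pc s = W1 \<longleftrightarrow> pc (P i) = W1) \<Longrightarrow> r1 m' = r1 m \<Longrightarrow>
    inv_first_write m' (P(i := s)) fw = inv_first_write m P fw"
  by (rule inv_first_write_cong) (auto simp: has_written_def fun_eq_iff)

lemma reader_ok_cong:
  "r1 m' (rnd s) = r1 m (rnd s) \<Longrightarrow> fw' (rnd s) = fw (rnd s) \<Longrightarrow>
    (pc s = WR2 \<Longrightarrow> c1 m' (rnd s) = c1 m (rnd s)) \<Longrightarrow> reader_ok m' fw' s = reader_ok m fw s"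
  unfolding reader_ok_def by (cases "pc s = WR2") simp_all

lemma u1_values:
  assumes "inv_first_write m P fw" "reader_ok m fw s" "pc s \<in> {RU2, RC, WR2}"
  shows "u1 s = None \<or> u1 s = Some 0 \<or> u1 s = Some 1"
  using assms(2,3) first_write_values[OF assms(1)] r1_values[OF assms(1)]
  unfolding reader_ok_def by metis

lemma round_passed_update:
  "rnd s = rnd (P i) \<Longrightarrow> (2 \<le> i \<longrightarrow> (pc s = WR2 \<longleftrightarrow> pc (P i) = WR2)) \<Longrightarrow>
    round_passed m (P(i := s)) = round_passed m P"
  unfolding round_passed_def fun_eq_iff by (metis fun_upd_apply)

lemma round_passed_new_round:
  assumes "round_passed m' (P(i := s)) j" "rnd s = Suc (rnd (P i))" "pc s \<noteq> WR2"
    "\<forall>j. r2 m' j \<longrightarrow> r2 m j \<or> j = rnd (P i)"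
  shows "round_passed m P j \<or> j = rnd (P i)"
  using assms unfolding round_passed_def by (auto simp: less_Suc_eq split: if_splits)

lemma inv_pc_update: "inv_pc P \<Longrightarrow> pc s \<in> pc_range i \<Longrightarrow> inv_pc (P(i := s))"
  unfolding inv_pc_def by simp

lemma inv_readers_update:
  "inv_readers m P fw \<Longrightarrow> (2 \<le> i \<Longrightarrow> reader_ok m fw s) \<Longrightarrow> inv_readers m (P(i := s)) fw"
  unfolding inv_readers_def by simp

lemma weakener_inv_flip:
  assumes "weakener_inv m P fw" "pc (P 0) = Flip"
  shows "weakener_inv m (exec_flip P b) fw"
  using assms unfolding weakener_inv_def exec_flip_def
  by (auto simp: pc_range_simps inv_first_write_update_writer inv_passed_def round_passed_update
      inv_coin_def intro!: inv_pc_update inv_readers_update)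

lemma weakener_inv_RU1:
  assumes "weakener_inv m P fw" "pc (P i) = RU1" "2 \<le> i"
  shows "weakener_inv m (P(i := (P i)\<lparr>pc := RU2, u1 := r1 m (rnd (P i))\<rparr>)) fw"
  using assms unfolding weakener_inv_def
  by (auto simp: pc_range_simps reader_ok_def inv_first_write_update_reader inv_passed_def
      round_passed_update inv_coin_def intro!: inv_pc_update inv_readers_update)

lemma weakener_inv_RU2:
  assumes "weakener_inv m P fw" "pc (P i) = RU2" "2 \<le> i"
  shows "weakener_inv m (P(i := (P i)\<lparr>pc := RC, u2 := r1 m (rnd (P i))\<rparr>)) fw"
proof -
  have "reader_ok m fw (P i)"
    using assms unfolding weakener_inv_def inv_readers_def by blast
  then show ?thesis
    using assms unfolding weakener_inv_def
    by (auto simp: pc_range_simps reader_ok_def inv_first_write_update_reader inv_passed_def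
        round_passed_update inv_coin_def intro!: inv_pc_update inv_readers_update)
qed

lemma weakener_inv_RC_fail:
  assumes "weakener_inv m P fw" "pc (P i) = RC" "2 \<le> i"
  shows "weakener_inv m (P(i := (P i)\<lparr>pc := Ret\<rparr>)) fw"
  using assms unfolding weakener_inv_def
  by (auto simp: pc_range_simps reader_ok_def inv_first_write_update_reader inv_passed_def
      round_passed_update inv_coin_def intro!: inv_pc_update inv_readers_update)

lemma weakener_inv_RC_pass:
  assumes inv: "weakener_inv m P fw" and "pc (P i) = RC" "2 \<le> i"
    and u: "u1 (P i) = Some (c1 m (rnd (P i)))" "u2 (P i) = Some (1 - c1 m (rnd (P i)))"
  shows "weakener_inv m (P(i := (P i)\<lparr>pc := WR2\<rparr>)) fw"
proof -
  let ?j = "rnd (P i)"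
  have "reader_ok m fw (P i)"
    using assms unfolding weakener_inv_def inv_readers_def by blast
  moreover have "c1 m ?j \<noteq> 1 - c1 m ?j"
    by presburger
  ultimately have "fw ?j = Some (c1 m ?j)"
    using u \<open>pc (P i) = RC\<close> unfolding reader_ok_def by auto
  moreover have "round_passed m P j \<or> j = ?j" if "round_passed m (P(i := (P i)\<lparr>pc := WR2\<rparr>)) j" for j
    using that unfolding round_passed_def by (auto split: if_splits)
  ultimately show ?thesis
    using assms unfolding weakener_inv_def
    by (auto simp: pc_range_simps reader_ok_def inv_first_write_update_reader inv_passed_def
        inv_coin_def intro!: inv_pc_update inv_readers_update)
qed

lemma weakener_inv_WR2:
  assumes inv: "weakener_inv m P fw" and "pc (P i) = WR2" "2 \<le> i"
  shows "weakener_inv (m\<lparr>r2 := (r2 m)(rnd (P i) := True)\<rparr>)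
    (P(i := (P i)\<lparr>pc := RU1, rnd := Suc (rnd (P i))\<rparr>)) fw"
proof -
  let ?m = "m\<lparr>r2 := (r2 m)(rnd (P i) := True)\<rparr>"
  let ?P = "P(i := (P i)\<lparr>pc := RU1, rnd := Suc (rnd (P i))\<rparr>)"
  have "inv_passed ?m ?P fw"
    unfolding inv_passed_def
  proof (intro allI impI)
    fix j
    assume "round_passed ?m ?P j"
    then have "round_passed m P j \<or> j = rnd (P i)"
      by (rule round_passed_new_round) auto
    then have "round_passed m P j"
      using assms(2,3) unfolding round_passed_def by auto
    then show "fw j = Some (c1 ?m j)"
      using inv by (simp add: weakener_inv_def inv_passed_def)
  qed
  moreover have "inv_readers ?m ?P fw"
    unfolding inv_readers_def
  proof (intro allI impI)
    fix k :: nat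
    assume "2 \<le> k"
    then show "reader_ok ?m fw (?P k)"
      using inv by (cases "k = i") (auto simp: weakener_inv_def inv_readers_def reader_ok_def)
  qed
  moreover have "inv_pc ?P"
    using inv assms(3) by (auto simp: weakener_inv_def pc_range_simps intro: inv_pc_update)
  moreover have "inv_first_write ?m ?P fw"
    using inv assms(3) by (simp add: weakener_inv_def inv_first_write_update_reader)
  moreover have "inv_coin ?m ?P"
    using inv assms(3) by (simp add: weakener_inv_def inv_coin_def)
  ultimately show ?thesis
    by (simp add: weakener_inv_def)
qed

lemma weakener_inv_RR2_fail:
  assumes "weakener_inv m P fw" "pc (P i) = RR2" "i < 2"
  shows "weakener_inv m (P(i := (P i)\<lparr>pc := Ret\<rparr>)) fw"
  using assms unfolding weakener_inv_def
  by (auto simp: pc_range_def inv_first_write_update_writer inv_readers_def inv_passed_def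
      round_passed_update inv_coin_def intro!: inv_pc_update)

lemma weakener_inv_RR2_go:
  assumes "weakener_inv m P fw" "pc (P i) = RR2" "i < 2" "r2 m (rnd (P i))"
  shows "weakener_inv m (P(i := (P i)\<lparr>pc := W1, rnd := Suc (rnd (P i))\<rparr>)) fw"
proof -
  let ?P = "P(i := (P i)\<lparr>pc := W1, rnd := Suc (rnd (P i))\<rparr>)"
  have "round_passed m P j" if "round_passed m ?P j" for j
  proof -
    have "round_passed m P j \<or> j = rnd (P i)"
      by (rule round_passed_new_round[OF that]) auto
    then show ?thesis
      using assms(4) unfolding round_passed_def by auto
  qed
  moreover have "has_written ?P k = has_written P k" for k
    using assms(2) by (auto simp: has_written_def fun_eq_iff less_Suc_eq)
  ultimately show ?thesis
    using assms unfolding weakener_inv_def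
    by (auto simp: pc_range_def inv_readers_def inv_passed_def inv_coin_def
        inv_first_write_cong[where P'="?P" and P=P] intro!: inv_pc_update)
qed

lemma weakener_inv_WC:
  assumes inv: "weakener_inv m P fw" and "pc (P 0) = WC"
  shows "weakener_inv (m\<lparr>c1 := (c1 m)(rnd (P 0) := cf (P 0))\<rparr>) (P(0 := (P 0)\<lparr>pc := RR2\<rparr>)) fw"
proof -
  let ?j = "rnd (P 0)"
  let ?m = "m\<lparr>c1 := (c1 m)(?j := cf (P 0))\<rparr>"
  let ?P = "P(0 := (P 0)\<lparr>pc := RR2\<rparr>)"
  have fw: "inv_first_write m P fw" and rd: "inv_readers m P fw" and coin: "inv_coin m P"
    and passed: "inv_passed m P fw"
    using inv by (simp_all add: weakener_inv_def)
  have unset: "c1 m ?j = -1"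
    using coin \<open>pc (P 0) = WC\<close> unfolding inv_coin_def by fastforce
  \<comment> \<open>no reader can be about to write \<open>R\<^sub>2[j]\<close>, since it would have read the coin \<open>-1\<close>\<close>
  have "reader_ok ?m fw s" if "reader_ok m fw s" for s
  proof (cases "rnd s = ?j \<and> pc s = WR2")
    case True
    then show ?thesis
      using that unset u1_values[OF fw that] by (simp add: reader_ok_def)
  next
    case False
    then show ?thesis
      using that reader_ok_cong[of ?m s m fw fw] by auto
  qed
  then have "inv_readers ?m ?P fw"
    using rd by (simp add: inv_readers_def)
  moreover have "inv_passed ?m ?P fw"
  proof -
    have "round_passed ?m ?P = round_passed m ?P"
      by (simp add: fun_eq_iff round_passed_def)
    also have "\<dots> = round_passed m P"
      by (rule round_passed_update) simp_all
    finally have "round_passed ?m ?P = round_passed m P" .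
    moreover have "\<not> round_passed m P ?j"
      using passed unset first_write_values[OF fw, of ?j] unfolding inv_passed_def by auto
    ultimately show ?thesis
      using passed by (auto simp: inv_passed_def)
  qed
  moreover have "inv_pc ?P"
    using inv by (auto simp: weakener_inv_def pc_range_simps intro: inv_pc_update)
  moreover have "inv_first_write ?m ?P fw"
    using fw by (simp add: inv_first_write_update_writer \<open>pc (P 0) = WC\<close>)
  moreover have "inv_coin ?m ?P"
    using coin by (auto simp: inv_coin_def)
  ultimately show ?thesis
    by (simp add: weakener_inv_def)
qed

lemma r1_eq_first_write:
  assumes "inv_first_write m P fw" "i < 2" "\<not> has_written P i j"
  shows "r1 m j = fw j"
  using assms unfolding inv_first_write_def first_write_ok_def by (auto simp: less_2_cases_iff)

lemma inv_first_write_W1: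
  assumes fw: "inv_first_write m P fw" and W1: "pc (P i) = W1" and "i < 2"
  defines "m' \<equiv> m\<lparr>r1 := (r1 m)(rnd (P i) := Some (int i))\<rparr>"
  shows "inv_first_write m' (P(i := (P i)\<lparr>pc := (if i = 0 then Flip else RR2)\<rparr>))
    (record_first_write m' fw)"
proof -
  let ?j = "rnd (P i)"
  let ?P = "P(i := (P i)\<lparr>pc := (if i = 0 then Flip else RR2)\<rparr>)"
  let ?fw = "record_first_write m' fw"
  have ok: "first_write_ok m P fw j" for j
    using fw by (simp add: inv_first_write_def)
  have "first_write_ok m' ?P ?fw j" for j
  proof (cases "j = ?j")
    case False
    then have "r1 m' j = r1 m j" "?fw j = fw j" "has_written ?P k j = has_written P k j" for k
      using record_first_write_keep[OF fw] W1 by (auto simp: m'_def has_written_def)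
    then have "first_write_ok m' ?P ?fw j = first_write_ok m P fw j"
      unfolding first_write_ok_def by (simp only:)
    with ok show ?thesis
      by simp
  next
    case True
    have "\<not> has_written P i ?j"
      using W1 by (simp add: has_written_def)
    moreover have "i = 0 \<or> i = 1"
      using \<open>i < 2\<close> by auto
    ultimately show ?thesis
      using ok[of ?j] True
      by (elim disjE; cases "fw ?j")
        (auto simp: first_write_ok_def record_first_write_def m'_def has_written_def)
  qed
  then show ?thesis
    by (simp add: inv_first_write_def)
qed

lemma reader_ok_W1:
  assumes fw: "inv_first_write m P fw" and W1: "pc (P i) = W1" and "i < 2"
    and rd: "reader_ok m fw s"
  defines "m' \<equiv> m\<lparr>r1 := (r1 m)(rnd (P i) := Some (int i))\<rparr>"
  shows "reader_ok m' (record_first_write m' fw) s"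
proof (cases "rnd s = rnd (P i)")
  case False
  then have "r1 m' (rnd s) = r1 m (rnd s)" "record_first_write m' fw (rnd s) = fw (rnd s)"
    using record_first_write_keep[OF fw] by (auto simp: m'_def)
  moreover have "c1 m' (rnd s) = c1 m (rnd s)"
    by (simp add: m'_def)
  ultimately have "reader_ok m' (record_first_write m' fw) s = reader_ok m fw s"
    by (intro reader_ok_cong)
  with rd show ?thesis
    by simp
next
  case True
  have "r1 m (rnd s) = fw (rnd s)"
    using True by (intro r1_eq_first_write[OF fw \<open>i < 2\<close>]) (simp add: has_written_def W1)
  then have u1: "u1 s = None \<or> u1 s = fw (rnd s)" if "pc s \<in> {RU2, RC, WR2}"
    using rd that unfolding reader_ok_def by metis
  have fw': "record_first_write m' fw (rnd s) =
      (case fw (rnd s) of None \<Rightarrow> Some (int i) | Some v \<Rightarrow> Some v)"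
    using True by (simp add: record_first_write_def m'_def split: option.split)
  show ?thesis
    unfolding reader_ok_def
  proof (intro conjI impI)
    assume "pc s \<in> {RU2, RC, WR2}"
    then show "u1 s = None \<or> u1 s = record_first_write m' fw (rnd s) \<or> u1 s = r1 m' (rnd s)"
      using u1 fw' by (cases "fw (rnd s)") auto
  next
    assume "pc s \<in> {RC, WR2}" "u1 s \<noteq> None" "u2 s \<noteq> None" "u1 s \<noteq> u2 s"
    then show "u1 s = record_first_write m' fw (rnd s)"
      using rd fw' unfolding reader_ok_def by (cases "fw (rnd s)") auto
  next
    assume "pc s = WR2"
    then show "u1 s = Some (c1 m' (rnd s))"
      using rd by (simp add: reader_ok_def m'_def)
  next
    assume "pc s = WR2"
    then show "u2 s = Some (1 - c1 m' (rnd s))"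
      using rd by (simp add: reader_ok_def m'_def)
  qed
qed

lemma weakener_inv_W1:
  assumes inv: "weakener_inv m P fw" and W1: "pc (P i) = W1" and "i < 2"
  defines "m' \<equiv> m\<lparr>r1 := (r1 m)(rnd (P i) := Some (int i))\<rparr>"
  shows "weakener_inv m' (P(i := (P i)\<lparr>pc := (if i = 0 then Flip else RR2)\<rparr>))
    (record_first_write m' fw)"
proof -
  let ?P = "P(i := (P i)\<lparr>pc := (if i = 0 then Flip else RR2)\<rparr>)"
  have fw: "inv_first_write m P fw"
    using inv by (simp add: weakener_inv_def)
  have "inv_first_write m' ?P (record_first_write m' fw)"
    unfolding m'_def using fw W1 \<open>i < 2\<close> by (rule inv_first_write_W1)
  moreover have "inv_readers m' ?P (record_first_write m' fw)"
    using inv reader_ok_W1[OF fw W1 \<open>i < 2\<close>] \<open>i < 2\<close>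
    by (simp add: weakener_inv_def inv_readers_def m'_def)
  moreover have "inv_pc ?P"
    using inv \<open>i < 2\<close> by (auto simp: weakener_inv_def pc_range_def intro: inv_pc_update)
  moreover have "inv_coin m' ?P"
    using inv W1 by (auto simp: weakener_inv_def inv_coin_def m'_def)
  moreover have "round_passed m' ?P = round_passed m P"
    using \<open>i < 2\<close> by (simp add: fun_eq_iff round_passed_def m'_def round_passed_update)
  then have "inv_passed m' ?P (record_first_write m' fw)"
    using inv record_first_write_keep[OF fw] by (auto simp: weakener_inv_def inv_passed_def m'_def)
  ultimately show ?thesis
    by (simp add: weakener_inv_def)
qed

lemma weakener_inv_exec_op:
  assumes inv: "weakener_inv m P fw" and q: "cur_op i (P i) = Some q"
    and exec: "exec_op m P i q = (m', P')"
  shows "weakener_inv m' P' (record_first_write m' fw)"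
proof -
  let ?j = "rnd (P i)"
  have "pc (P i) \<in> pc_range i"
    using inv by (simp add: weakener_inv_def inv_pc_def)
  note index = pc_range_index[OF this]
  have m': "m' = fst (apply_op m q)" and P': "P' = P(i := after i (P i) (snd (apply_op m q)))"
    using exec by (auto simp: exec_op_def)
  have q_eq: "q = the (cur_op i (P i))"
    using q by simp
  have keep_fw: "weakener_inv m' P' (record_first_write m' fw)" if "weakener_inv m' P' fw"
    using that record_first_write_id[of m' P' fw m'] by (simp add: weakener_inv_def)
  show ?thesis
  proof (cases "pc (P i)")
    case W1
    with index show ?thesis
      using weakener_inv_W1[OF inv W1] by (auto simp: m' P' q_eq cur_op_def after_def)
  next
    case WC
    with index show ?thesis
      using keep_fw weakener_inv_WC[OF inv] by (auto simp: m' P' q_eq cur_op_def after_def)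
  next
    case RR2
    with index show ?thesis
      using keep_fw weakener_inv_RR2_go[OF inv RR2] weakener_inv_RR2_fail[OF inv RR2]
      by (cases "r2 m ?j") (auto simp: m' P' q_eq cur_op_def after_def)
  next
    case RU1
    with index show ?thesis
      using keep_fw weakener_inv_RU1[OF inv RU1] by (auto simp: m' P' q_eq cur_op_def after_def)
  next
    case RU2
    with index show ?thesis
      using keep_fw weakener_inv_RU2[OF inv RU2] by (auto simp: m' P' q_eq cur_op_def after_def)
  next
    case RC
    with index show ?thesis
      using keep_fw weakener_inv_RC_pass[OF inv RC] weakener_inv_RC_fail[OF inv RC]
      by (cases "u1 (P i) \<noteq> Some (c1 m ?j) \<or> u2 (P i) \<noteq> Some (1 - c1 m ?j)")
        (auto simp: m' P' q_eq cur_op_def after_def)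
  next
    case WR2
    with index show ?thesis
      using keep_fw weakener_inv_WR2[OF inv WR2] by (auto simp: m' P' q_eq cur_op_def after_def)
  qed (use q in \<open>simp_all add: cur_op_def\<close>)
qed

lemma weakener_inv_do_act:
  assumes "cfg_wf c" and inv: "weakener_inv (shm c) (eff_loc c) fw"
  shows "weakener_inv (shm (do_act a b c)) (eff_loc (do_act a b c))
    (record_first_write (shm (do_act a b c)) fw)"
proof -
  have fw: "inv_first_write (shm c) (eff_loc c) fw"
    using inv by (simp add: weakener_inv_def)
  from \<open>cfg_wf c\<close> show ?thesis
  proof (cases rule: do_act_cases[where a=a and b=b])
    case flip
    then show ?thesis
      using weakener_inv_flip[OF inv is_flip_pc] record_first_write_id[OF fw] by simp
  next
    case stutter
    then show ?thesis
      using inv record_first_write_id[OF fw] by simp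
  next
    case (exec i q)
    then show ?thesis
      using weakener_inv_exec_op[OF inv] by metis
  qed
qed

section \<open>Passing a round requires a correct prediction of its coin\<close>

definition first_writes_of :: "cfg list \<Rightarrow> nat \<Rightarrow> int option" where
  "first_writes_of h = foldl (\<lambda>fw c. record_first_write (shm c) fw) (\<lambda>_. None) h"

abbreviation first_writes_at :: "adversary \<Rightarrow> bool stream \<Rightarrow> nat \<Rightarrow> nat \<Rightarrow> int option" where
  "first_writes_at A \<omega> t \<equiv> first_writes_of (hist A \<omega> t)"

lemma config_0: "config A \<omega> 0 = init_cfg"
  by (simp add: config_def)

lemma config_Suc: "config A \<omega> (Suc t) = do_act (sched A \<omega> t) (\<omega> !! t) (config A \<omega> t)"
  by (simp add: config_def sched_def Let_def)

lemma first_writes_of_init: "first_writes_of [init_cfg] = (\<lambda>_. None)"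
  by (simp add: first_writes_of_def record_first_write_def init_cfg_def)

lemma first_writes_at_Suc:
  "first_writes_at A \<omega> (Suc t) = record_first_write (shm (config A \<omega> (Suc t))) (first_writes_at A \<omega> t)"
proof -
  have "hist A \<omega> (Suc t) = hist A \<omega> t @ [config A \<omega> (Suc t)]"
    by (simp add: config_def Let_def)
  then show ?thesis
    by (simp add: first_writes_of_def)
qed

lemma invariant_config:
  "cfg_wf (config A \<omega> t) \<and>
   weakener_inv (shm (config A \<omega> t)) (eff_loc (config A \<omega> t)) (first_writes_at A \<omega> t)"
proof (induction t)
  case 0
  show ?case
    using cfg_wf_init weakener_inv_init by (simp add: config_0 first_writes_of_init)
next
  case (Suc t)
  then show ?case
    using cfg_wf_do_act weakener_inv_do_act by (simp add: config_Suc first_writes_at_Suc del: hist.simps)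
qed

definition hist_of_coins :: "adversary \<Rightarrow> bool list \<Rightarrow> cfg list" where
  "hist_of_coins A l = foldl (\<lambda>h b. h @ [do_act (A h) b (last h)]) [init_cfg] l"

lemma hist_eq_hist_of_coins: "hist A \<omega> t = hist_of_coins A (stake t \<omega>)"
  by (induction t) (simp_all add: hist_of_coins_def stake_Suc Let_def del: stake.simps(2))

text \<open>At \<open>p\<^sub>0\<close>'s coin flip in round \<open>j\<close> the prediction is the first writer of \<open>R\<^sub>1[j]\<close>,
  read as a boolean; it is defined because \<open>p\<^sub>0\<close> has written \<open>R\<^sub>1[j]\<close> already.\<close>
definition predict_coin :: "adversary \<Rightarrow> bool list \<Rightarrow> bool option" where
  "predict_coin A l = (let h = hist_of_coins A l; c = last h in
     if is_flip (A h) c then Some (first_writes_of h (rnd (loc c 0)) = Some 1) else None)"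

lemma predict_coin_stake:
  "predict_coin A (stake t \<omega>) =
    (if is_flip (sched A \<omega> t) (config A \<omega> t)
     then Some (first_writes_at A \<omega> t (rnd (loc (config A \<omega> t) 0)) = Some 1) else None)"
  by (simp add: predict_coin_def hist_eq_hist_of_coins[symmetric] sched_def config_def Let_def)

definition flips_done :: "lstate \<Rightarrow> nat" where
  "flips_done s = rnd s + (if pc s \<in> {WC, RR2, Ret} then 1 else 0)"

lemma flips_done_exec_op:
  assumes "weakener_inv m P fw" "cur_op i (P i) = Some q" "exec_op m P i q = (m', P')"
  shows "flips_done (P' 0) = flips_done (P 0)"
proof (cases "i = 0")
  case True
  have "pc (P 0) \<in> pc_range 0"
    using assms(1) by (simp add: weakener_inv_def inv_pc_def)
  then show ?thesis
    using assms(2,3) True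
    by (auto simp: exec_op_def flips_done_def after_def pc_range_def cur_op_def
        split: pcv.splits if_splits)
qed (use assms(3) in \<open>auto simp: exec_op_def\<close>)

lemma guess_count_predict_coin:
  "guess_count (predict_coin A) \<omega> t = flips_done (eff_loc (config A \<omega> t) 0)"
proof (induction t)
  case 0
  show ?case
    by (simp add: config_0 eff_loc_def eff_state_def init_cfg_def flips_done_def)
next
  case (Suc t)
  let ?c = "config A \<omega> t"
  have inv: "cfg_wf ?c" "weakener_inv (shm ?c) (eff_loc ?c) (first_writes_at A \<omega> t)"
    using invariant_config by blast+
  from inv(1) show ?case
  proof (cases rule: do_act_cases[where a="sched A \<omega> t" and b="\<omega> !! t"])
    case flip
    then show ?thesis
      using Suc is_flip_pc[OF flip(1)]
      by (simp add: config_Suc predict_coin_stake flips_done_def exec_flip_def)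
  next
    case stutter
    then show ?thesis
      using Suc by (simp add: config_Suc predict_coin_stake)
  next
    case (exec i q)
    then show ?thesis
      using Suc flips_done_exec_op[OF inv(2) exec(2) exec(3)[symmetric]]
      by (simp add: config_Suc predict_coin_stake)
  qed
qed

definition coin_mismatch :: "nat \<Rightarrow> shmem \<Rightarrow> (nat \<Rightarrow> lstate) \<Rightarrow> (nat \<Rightarrow> int option) \<Rightarrow> bool" where
  "coin_mismatch j m P fw \<longleftrightarrow>
     (rnd (P 0) = j \<and> pc (P 0) = WC \<and> cf (P 0) \<noteq> -1 \<and> Some (cf (P 0)) \<noteq> fw j) \<or>
     (c1 m j \<noteq> -1 \<and> Some (c1 m j) \<noteq> fw j)"

lemma coin_mismatch_not_passed:
  assumes inv: "weakener_inv m P fw" and "coin_mismatch j m P fw"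
  shows "\<not> round_passed m P j"
proof
  assume "round_passed m P j"
  then have fw: "fw j = Some (c1 m j)"
    using inv by (simp add: weakener_inv_def inv_passed_def)
  moreover have "inv_first_write m P fw"
    using inv by (simp add: weakener_inv_def)
  ultimately have "c1 m j \<noteq> -1"
    using first_write_values[of m P fw j] by auto
  then have "j < rnd (P 0) \<or> (j = rnd (P 0) \<and> (pc (P 0) = RR2 \<or> pc (P 0) = Ret))"
    using inv by (simp add: weakener_inv_def inv_coin_def)
  then show False
    using assms(2) fw unfolding coin_mismatch_def by auto
qed

lemma coin_mismatch_exec_op:
  assumes inv: "weakener_inv m P fw" and q: "cur_op i (P i) = Some q"
    and exec: "exec_op m P i q = (m', P')" and mismatch: "coin_mismatch j m P fw"
  shows "coin_mismatch j m' P' (record_first_write m' fw)"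
proof -
  have coin: "inv_coin m P"
    using inv by (simp add: weakener_inv_def)
  have "pc (P i) \<in> pc_range i"
    using inv by (simp add: weakener_inv_def inv_pc_def)
  then have WC: "pc (P i) = WC \<Longrightarrow> i = 0"
    by (auto simp: pc_range_def split: if_splits)
  then have c1': "c1 m' = (if pc (P i) = WC then (c1 m)(rnd (P 0) := cf (P 0)) else c1 m)"
    and P'0: "i \<noteq> 0 \<Longrightarrow> P' 0 = P 0"
    using q exec by (auto simp: exec_op_def cur_op_def split: pcv.splits)
  have "has_written P 0 j"
    using mismatch coin unfolding coin_mismatch_def inv_coin_def has_written_def by fastforce
  then have fw': "record_first_write m' fw j = fw j"
    using inv first_write_if_written record_first_write_keep
    by (metis weakener_inv_def)
  show ?thesis
  proof (cases "rnd (P 0) = j \<and> pc (P 0) = WC \<and> cf (P 0) \<noteq> -1 \<and> Some (cf (P 0)) \<noteq> fw j")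
    case True
    then show ?thesis
      using c1' P'0 fw' by (cases "i = 0") (auto simp: coin_mismatch_def)
  next
    case False
    then have "c1 m j \<noteq> -1" "Some (c1 m j) \<noteq> fw j"
      using mismatch unfolding coin_mismatch_def by blast+
    moreover have "c1 m' j = c1 m j"
    proof (cases "pc (P i) = WC")
      case True
      then have "pc (P 0) = WC"
        using WC by auto
      then show ?thesis
        using c1' coin \<open>c1 m j \<noteq> -1\<close> unfolding inv_coin_def by auto
    qed (simp add: c1')
    ultimately show ?thesis
      using fw' by (simp add: coin_mismatch_def)
  qed
qed

lemma coin_mismatch_do_act:
  assumes "cfg_wf c" and inv: "weakener_inv (shm c) (eff_loc c) fw"
    and mismatch: "coin_mismatch j (shm c) (eff_loc c) fw"
  shows "coin_mismatch j (shm (do_act a b c)) (eff_loc (do_act a b c))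
    (record_first_write (shm (do_act a b c)) fw)"
proof -
  have fw: "inv_first_write (shm c) (eff_loc c) fw"
    using inv by (simp add: weakener_inv_def)
  from \<open>cfg_wf c\<close> show ?thesis
  proof (cases rule: do_act_cases[where a=a and b=b])
    case flip
    then show ?thesis
      using mismatch is_flip_pc[OF flip(1)] record_first_write_id[OF fw]
      by (simp add: coin_mismatch_def exec_flip_def)
  next
    case stutter
    then show ?thesis
      using mismatch record_first_write_id[OF fw] by simp
  next
    case (exec i q)
    then show ?thesis
      using coin_mismatch_exec_op[OF inv exec(2) exec(3)[symmetric] mismatch] by simp
  qed
qed

abbreviation coin_mismatch_at :: "adversary \<Rightarrow> bool stream \<Rightarrow> nat \<Rightarrow> nat \<Rightarrow> bool" where
  "coin_mismatch_at A \<omega> j t \<equiv>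
     coin_mismatch j (shm (config A \<omega> t)) (eff_loc (config A \<omega> t)) (first_writes_at A \<omega> t)"

lemma coin_mismatch_at_mono:
  assumes "t \<le> t'" "coin_mismatch_at A \<omega> j t"
  shows "coin_mismatch_at A \<omega> j t'"
  using assms
proof (induction t' rule: dec_induct)
  case (step t')
  then show ?case
    using coin_mismatch_do_act invariant_config[of A \<omega> t']
    by (simp add: config_Suc first_writes_at_Suc del: hist.simps)
qed simp

lemma wrong_prediction_coin_mismatch:
  assumes flip: "is_flip (sched A \<omega> t) (config A \<omega> t)"
    and wrong: "predict_coin A (stake t \<omega>) \<noteq> Some (\<omega> !! t)"
  shows "coin_mismatch_at A \<omega> (rnd (loc (config A \<omega> t) 0)) (Suc t)"
proof -
  let ?c = "config A \<omega> t"
  let ?j = "rnd (loc ?c 0)"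
  have inv: "cfg_wf ?c" "weakener_inv (shm ?c) (eff_loc ?c) (first_writes_at A \<omega> t)"
    using invariant_config by blast+
  have fw: "inv_first_write (shm ?c) (eff_loc ?c) (first_writes_at A \<omega> t)"
    using inv(2) by (simp add: weakener_inv_def)
  have eff0: "eff_loc ?c 0 = loc ?c 0"
    using flip by (simp add: is_flip_def eff_loc_def eff_state_no_pend)
  from inv(1) have "shm (config A \<omega> (Suc t)) = shm ?c \<and>
      eff_loc (config A \<omega> (Suc t)) = exec_flip (eff_loc ?c) (\<omega> !! t)"
  proof (cases rule: do_act_cases[where a="sched A \<omega> t" and b="\<omega> !! t"])
    case flip
    then show ?thesis
      by (simp add: config_Suc)
  qed (use flip in auto)
  then have step: "shm (config A \<omega> (Suc t)) = shm ?c"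
      "eff_loc (config A \<omega> (Suc t)) = exec_flip (eff_loc ?c) (\<omega> !! t)"
    by auto
  then have "first_writes_at A \<omega> (Suc t) = first_writes_at A \<omega> t"
    using record_first_write_id[OF fw] by (simp add: first_writes_at_Suc del: hist.simps)
  moreover have "has_written (eff_loc ?c) 0 ?j"
    using flip eff0 by (simp add: is_flip_def has_written_def)
  then have "first_writes_at A \<omega> t ?j = Some 0 \<or> first_writes_at A \<omega> t ?j = Some 1"
    using first_write_values[OF fw, of ?j] first_write_if_written[OF fw] by auto
  ultimately show ?thesis
    using step eff0 wrong flip
    by (auto simp: coin_mismatch_def exec_flip_def predict_coin_stake)
qed

lemma round_passed_below_rnd:
  assumes "j < rnd (loc (config A \<omega> t) i)"
  shows "round_passed (shm (config A \<omega> t)) (eff_loc (config A \<omega> t)) j"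
proof -
  have "rnd s \<le> rnd (eff_state i s)" for s
    by (auto simp: eff_state_def after_def split: option.splits pcv.splits rres.splits)
  then show ?thesis
    using assms unfolding round_passed_def eff_loc_def by (meson less_le_trans)
qed

lemma guess_count_ge_rnd:
  assumes "k \<le> rnd (loc (config A \<omega> t) i)"
  shows "k \<le> guess_count (predict_coin A) \<omega> t"
proof (cases k)
  case (Suc j)
  let ?c = "config A \<omega> t"
  have inv: "weakener_inv (shm ?c) (eff_loc ?c) (first_writes_at A \<omega> t)"
    using invariant_config by blast
  have "round_passed (shm ?c) (eff_loc ?c) j"
    using assms Suc by (intro round_passed_below_rnd[where i=i]) simp
  then have "first_writes_at A \<omega> t j = Some (c1 (shm ?c) j)"
    using inv by (simp add: weakener_inv_def inv_passed_def)
  then have "c1 (shm ?c) j \<noteq> -1"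
    using inv first_write_values[of "shm ?c" "eff_loc ?c" "first_writes_at A \<omega> t" j]
    by (auto simp: weakener_inv_def)
  then have "j < rnd (eff_loc ?c 0) \<or> (j = rnd (eff_loc ?c 0) \<and> pc (eff_loc ?c 0) \<in> {RR2, Ret})"
    using inv by (simp add: weakener_inv_def inv_coin_def)
  then show ?thesis
    using Suc by (auto simp: guess_count_predict_coin flips_done_def)
qed simp

lemma guesses_right_if_rnd:
  assumes "k \<le> rnd (loc (config A \<omega> t) i)"
  shows "guesses_right (predict_coin A) k \<omega> t"
  unfolding guesses_right_iff
proof (intro allI impI)
  fix s
  assume "s < t" and "guess_count (predict_coin A) \<omega> s < k"
  show "case predict_coin A (stake s \<omega>) of None \<Rightarrow> True | Some b \<Rightarrow> \<omega> !! s = b"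
  proof (cases "is_flip (sched A \<omega> s) (config A \<omega> s)")
    case True
    let ?j = "rnd (loc (config A \<omega> s) 0)"
    have "guess_count (predict_coin A) \<omega> s = ?j"
      using is_flip_pc[OF True] True
      by (simp add: guess_count_predict_coin flips_done_def is_flip_def eff_loc_def eff_state_no_pend)
    then have "round_passed (shm (config A \<omega> t)) (eff_loc (config A \<omega> t)) ?j"
      using assms \<open>guess_count (predict_coin A) \<omega> s < k\<close> by (intro round_passed_below_rnd[where i=i]) simp
    moreover have "\<not> coin_mismatch_at A \<omega> ?j t"
      using coin_mismatch_not_passed invariant_config calculation by blast
    then have "predict_coin A (stake s \<omega>) = Some (\<omega> !! s)"
      using wrong_prediction_coin_mismatch[OF True] coin_mismatch_at_mono[of "Suc s" t] \<open>s < t\<close>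
      by auto
    then show ?thesis
      by simp
  qed (simp add: predict_coin_stake)
qed

lemma guess_wins_if_rnd:
  "k \<le> rnd (loc (config A \<omega> t) i) \<Longrightarrow> \<omega> \<in> guess_wins (predict_coin A) k t"
  by (simp add: guess_wins_def guess_count_ge_rnd guesses_right_if_rnd)

section \<open>Correct processes return once the rounds are bounded\<close>

fun pc_rank :: "pcv \<Rightarrow> nat" where
  "pc_rank W1 = 0" | "pc_rank Flip = 1" | "pc_rank WC = 2" | "pc_rank RR2 = 3"
| "pc_rank RU1 = 0" | "pc_rank RU2 = 1" | "pc_rank RC = 2" | "pc_rank WR2 = 3" | "pc_rank Ret = 4"

definition pend_rank :: "(rop \<times> rres option) option \<Rightarrow> nat" where
  "pend_rank p = (case p of None \<Rightarrow> 0 | Some (q, None) \<Rightarrow> 1 | Some (q, Some r) \<Rightarrow> 2)"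

text \<open>A response raises \<open>3 * pc_rank\<close> by at least 3 while \<open>pend_rank\<close> drops by at most 2,
  and a new round is worth \<open>15 > 3 * 4 + 2\<close>.\<close>
definition progress :: "lstate \<Rightarrow> nat" where
  "progress s = 15 * rnd s + 3 * pc_rank (pc s) + pend_rank (pend s)"

lemma progress_le: "progress s \<le> 15 * rnd s + 14"
proof -
  have "pc_rank (pc s) \<le> 4"
    by (cases "pc s") auto
  then show ?thesis
    by (auto simp: progress_def pend_rank_def split: option.splits)
qed

lemma progress_after:
  assumes "cur_op i s = Some q" "r = snd (apply_op m q)"
  shows "15 * rnd s + 3 * pc_rank (pc s) + 3 \<le> 15 * rnd (after i s r) + 3 * pc_rank (pc (after i s r))"
  using assms by (cases "pc s"; cases q) (auto simp: cur_op_def after_def)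

lemma progress_lin_step: "progress (loc c j) \<le> progress (loc (lin_step i c) j)"
  by (auto simp: lin_step_def Let_def progress_def pend_rank_def split: option.splits prod.splits)

lemma loc_proc_step_other: "j \<noteq> i \<Longrightarrow> loc (proc_step i b c) j = loc c j"
  by (auto simp: proc_step_def Let_def split: option.splits prod.splits)

lemma proc_step_Ret:
  assumes "cfg_wf c" "pc (loc c i) = Ret"
  shows "proc_step i b c = c"
proof -
  have "cur_op i (loc c i) = None"
    using assms(2) by (simp add: cur_op_eq_None_iff)
  moreover have "pend_wf i (loc c i)"
    using assms(1) by (simp add: cfg_wf_def)
  ultimately have "pend (loc c i) = None"
    by (cases "pend (loc c i)") (auto simp: pend_wf_def)
  moreover have "cur_op i (loc c i) = None"
    using assms(2) by (simp add: cur_op_eq_None_iff)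
  ultimately show ?thesis
    using assms(2) by (simp add: proc_step_def)
qed

lemma progress_proc_step:
  assumes "cfg_wf c" "pc (loc c i) \<noteq> Ret"
  shows "progress (loc c i) < progress (loc (proc_step i b c) i)"
proof -
  let ?s = "loc c i"
  have wf: "pend_wf i ?s"
    using assms(1) by (simp add: cfg_wf_def)
  show ?thesis
  proof (cases "pend ?s")
    case None
    then show ?thesis
      using assms(2)
      by (cases "pc ?s = Flip"; cases "cur_op i ?s")
        (auto simp: proc_step_def Let_def progress_def pend_rank_def cur_op_eq_None_iff)
  next
    case (Some p)
    obtain q x where p: "p = (q, x)"
      by (cases p)
    have q: "cur_op i ?s = Some q"
      using wf Some p by (simp add: pend_wf_def)
    have "\<exists>m. loc (proc_step i b c) i = after i (?s\<lparr>pend := None\<rparr>) (snd (apply_op m q))"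
    proof (cases x)
      case None
      then show ?thesis
        using Some p by (auto simp: proc_step_def Let_def split: prod.splits intro: exI[of _ "shm c"])
    next
      case (Some r)
      then show ?thesis
        using wf \<open>pend ?s = Some p\<close> p by (auto simp: proc_step_def pend_wf_def)
    qed
    then obtain m where "loc (proc_step i b c) i = after i (?s\<lparr>pend := None\<rparr>) (snd (apply_op m q))"
      by blast
    then show ?thesis
      using progress_after[OF q refl, of m] Some p
      by (simp add: progress_def pend_rank_def split: option.splits)
  qed
qed

lemma progress_do_act:
  assumes "cfg_wf c"
  shows "progress (loc c j) \<le> progress (loc (do_act a b c) j)"
    and "a = Step j \<Longrightarrow> pc (loc c j) \<noteq> Ret \<Longrightarrow> progress (loc c j) < progress (loc (do_act a b c) j)"
proof -
  show "a = Step j \<Longrightarrow> pc (loc c j) \<noteq> Ret \<Longrightarrow> progress (loc c j) < progress (loc (do_act a b c) j)"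
    using progress_proc_step[OF assms] by (simp add: do_act_def)
  show "progress (loc c j) \<le> progress (loc (do_act a b c) j)"
  proof (cases a)
    case (Step i)
    then show ?thesis
      using progress_proc_step[OF assms, of i b] proc_step_Ret[OF assms, of i b]
      by (cases "j = i"; cases "pc (loc c i) = Ret")
        (auto simp: do_act_def loc_proc_step_other less_imp_le)
  qed (simp add: do_act_def progress_lin_step)
qed

lemma steps_le_progress:
  assumes "\<forall>t. pc (loc (config A \<omega> t) i) \<noteq> Ret"
  shows "card {s. s < t \<and> sched A \<omega> s = Step i} \<le> progress (loc (config A \<omega> t) i)"
proof (induction t)
  case (Suc t)
  have wf: "cfg_wf (config A \<omega> t)"
    using invariant_config by blast
  show ?case
  proof (cases "sched A \<omega> t = Step i")
    case True
    then have "{s. s < Suc t \<and> sched A \<omega> s = Step i} = insert t {s. s < t \<and> sched A \<omega> s = Step i}"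
      by auto
    moreover have "progress (loc (config A \<omega> t) i) < progress (loc (config A \<omega> (Suc t)) i)"
      using progress_do_act(2)[OF wf True] assms by (simp add: config_Suc)
    ultimately show ?thesis
      using Suc by simp
  next
    case False
    then have "{s. s < Suc t \<and> sched A \<omega> s = Step i} = {s. s < t \<and> sched A \<omega> s = Step i}"
      using less_Suc_eq by auto
    then show ?thesis
      using Suc progress_do_act(1)[OF wf] by (simp add: config_Suc le_trans)
  qed
qed simp

lemma returned_if_rnd_bounded:
  assumes bound: "\<forall>t. rnd (loc (config A \<omega> t) i) \<le> R" and "correct A \<omega> i"
  shows "returned A \<omega> i"
proof (rule ccontr)
  assume "\<not> returned A \<omega> i"
  then have running: "\<forall>t. pc (loc (config A \<omega> t) i) \<noteq> Ret"
    by (simp add: returned_def)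
  have "infinite {t. sched A \<omega> t = Step i}"
    using \<open>correct A \<omega> i\<close> by (simp add: correct_def INFM_iff_infinite)
  then obtain F where F: "F \<subseteq> {t. sched A \<omega> t = Step i}" "finite F" "card F = 15 * R + 15"
    using infinite_arbitrarily_large by blast
  let ?t = "Suc (Max F)"
  have "card F \<le> card {s. s < ?t \<and> sched A \<omega> s = Step i}"
    using F by (intro card_mono) (auto simp: le_imp_less_Suc)
  also have "\<dots> \<le> progress (loc (config A \<omega> ?t) i)"
    by (rule steps_le_progress[OF running])
  also have "\<dots> \<le> 15 * R + 14"
    using progress_le[of "loc (config A \<omega> ?t) i"] bound[rule_format, of ?t] by linarith
  finally show False
    using F by simp
qed

section \<open>The expected number of rounds\<close>

lemma suminf_half_powers: "(\<Sum>k. (1/2::ennreal) ^ k) = 2"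
proof -
  have "(\<Sum>k. ennreal ((1/2) ^ k)) = ennreal (1 / (1 - 1/2))"
    by (intro suminf_ennreal_eq geometric_sums) auto
  moreover have "ennreal ((1/2) ^ k) = (1/2) ^ k" for k
  proof -
    have "ennreal ((1/2) ^ k) = ennreal (1/2) ^ k"
      by (rule ennreal_power[symmetric]) simp
    also have "ennreal (1/2) = 1/2"
      by (metis ennreal_divide_numeral ennreal_1 zero_le_one)
    finally show ?thesis .
  qed
  ultimately show ?thesis
    by simp
qed

definition predictions_right :: "adversary \<Rightarrow> nat \<Rightarrow> bool stream set" where
  "predictions_right A k = (\<Union>t. guess_wins (predict_coin A) k t)"

definition streak :: "adversary \<Rightarrow> bool stream \<Rightarrow> ennreal" where
  "streak A \<omega> = (\<Sum>k. indicator (predictions_right A k) \<omega>)"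

lemma sets_predictions_right [measurable]: "predictions_right A k \<in> sets coins"
  unfolding predictions_right_def by measurable

lemma borel_measurable_streak: "streak A \<in> borel_measurable coins"
  unfolding streak_def by measurable

lemma nn_integral_streak_le: "(\<integral>\<^sup>+\<omega>. streak A \<omega> \<partial>coins) \<le> 2"
proof -
  have "(\<integral>\<^sup>+\<omega>. streak A \<omega> \<partial>coins) = (\<Sum>k. emeasure coins (predictions_right A k))"
    unfolding streak_def by (subst nn_integral_suminf) auto
  also have "\<dots> \<le> (\<Sum>k. (1/2) ^ k)"
    by (intro suminf_le) (auto simp: predictions_right_def emeasure_UN_guess_wins_le)
  also have "\<dots> = 2"
    by (rule suminf_half_powers)
  finally show ?thesis .
qed

lemma AE_streak_finite: "AE \<omega> in coins. streak A \<omega> \<noteq> \<infinity>"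
proof (rule nn_integral_PInf_AE[OF borel_measurable_streak])
  show "integral\<^sup>N coins (streak A) \<noteq> \<infinity>"
    using nn_integral_streak_le[of A] by (auto simp: top_unique)
qed

lemma rnd_le_streak: "ennreal (real (Suc (rnd (loc (config A \<omega> t) i)))) \<le> streak A \<omega>"
proof -
  let ?r = "rnd (loc (config A \<omega> t) i)"
  have "\<omega> \<in> predictions_right A k" if "k < Suc ?r" for k
    using that guess_wins_if_rnd[of k A \<omega> t i] by (auto simp: predictions_right_def)
  then have "ennreal (real (Suc ?r)) = (\<Sum>k<Suc ?r. indicator (predictions_right A k) \<omega>)"
    by (simp add: ennreal_of_nat_eq_real_of_nat)
  also have "\<dots> \<le> streak A \<omega>"
    unfolding streak_def by (rule sum_le_suminf) auto
  finally show ?thesis .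
qed

lemma returned_if_streak_finite:
  assumes "streak A \<omega> \<noteq> \<infinity>" "correct A \<omega> i"
  shows "returned A \<omega> i"
proof -
  obtain r where r: "streak A \<omega> = ennreal r" "0 \<le> r"
    using assms(1) by (cases "streak A \<omega>") auto
  have real_bound: "real (Suc (rnd (loc (config A \<omega> t) i))) \<le> r" for t
    using rnd_le_streak[of A \<omega> t i] ennreal_le_iff[OF r(2)] unfolding r(1) by blast
  have "rnd (loc (config A \<omega> t) i) \<le> nat \<lceil>r\<rceil>" for t
    using real_bound[of t] by linarith
  then show ?thesis
    using returned_if_rnd_bounded assms(2) by blast
qed

lemma rounds_le_streak: "rounds n A \<omega> \<le> streak A \<omega>"
  unfolding rounds_def by (intro SUP_least rnd_le_streak)

theorem theorem2:
  fixes n :: nat and A :: adversary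
  assumes "n \<ge> 3"
    and "\<forall>h. act_proc (A h) < n"
  shows "(AE \<omega> in coins. \<forall>i<n. correct A \<omega> i \<longrightarrow> returned A \<omega> i)
         \<and> (\<integral>\<^sup>+ \<omega>. rounds n A \<omega> \<partial>coins) \<le> 2"
proof
  show "AE \<omega> in coins. \<forall>i<n. correct A \<omega> i \<longrightarrow> returned A \<omega> i"
    using AE_streak_finite by eventually_elim (blast intro: returned_if_streak_finite)
  have "(\<integral>\<^sup>+ \<omega>. rounds n A \<omega> \<partial>coins) \<le> (\<integral>\<^sup>+ \<omega>. streak A \<omega> \<partial>coins)"
    by (intro nn_integral_mono rounds_le_streak)
  also have "\<dots> \<le> 2"
    by (rule nn_integral_streak_le)
  finally show "(\<integral>\<^sup>+ \<omega>. rounds n A \<omega> \<partial>coins) \<le> 2" .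
qed

end
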